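(* Let $A,B$ be real symmetric $n\times n$ matrices with $\|A\|\le2.5$, and let $\eta>0$. Let $X^{\mathsf c}$ be the solution of $$\min_{X\in\mathbb R^{n\times n}}\|AX-XB\|_F^2+\eta^2\|X\|_F^2\quad\text{s.t. }X\mathbf 1=\mathbf 1.$$ Then $$X^{\mathsf c}=\frac1{2\pi}\operatorname{Re}\oint_\Gamma F(z)R_A(z)\mathbf JR_B(z+\mathbf i\eta)\,dz,\qquad F(z)=\frac{2\mathbf i}{\mathbf 1^\top R_B(z+\mathbf i\eta)\mathbf 1-\mathbf 1^\top R_B(z-\mathbf i\eta)\mathbf 1},$$ where $\Gamma$ is the boundary of the rectangle with vertices $\pm3\pm\mathbf i\eta/2$, traversed counterclockwise.
   Context: $R_M(z)=(M-z\mathbf I)^{-1}$ is the resolvent of a symmetric matrix $M$; $\mathbf J$ is the all-ones $n\times n$ matrix and $\mathbf 1$ the all-ones vector; $\|\cdot\|$ is the spectral norm and $\|\cdot\|_F$ the Frobenius norm; real part and integral are entrywise. *)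

theory Defs
  imports "HOL-Complex_Analysis.Complex_Analysis"
begin

definition cmat :: "real^'n^'m \<Rightarrow> complex^'n^'m" where
  "cmat M = (\<chi> i j. complex_of_real (M $ i $ j))"

definition resolvent :: "real^'n^'n \<Rightarrow> complex \<Rightarrow> complex^'n^'n" where
  "resolvent M z = matrix_inv (cmat M - (\<chi> i j. if i = j then z else 0))"

definition onesJ :: "'a::one^'n^'m" where
  "onesJ = (\<chi> i j. 1)"

definition onesv :: "'a::one^'n" where
  "onesv = (\<chi> i. 1)"

definition spec_norm :: "real^'n^'m \<Rightarrow> real" where
  "spec_norm M = onorm (\<lambda>x. M *v x)"

definition frob_sq :: "real^'n^'m \<Rightarrow> real" where
  "frob_sq M = (\<Sum>i\<in>UNIV. \<Sum>j\<in>UNIV. (M $ i $ j)\<^sup>2)"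

definition symmetric_mat :: "real^'n^'n \<Rightarrow> bool" where
  "symmetric_mat M \<longleftrightarrow> transpose M = M"

definition objective :: "real^'n^'n \<Rightarrow> real^'n^'n \<Rightarrow> real \<Rightarrow> real^'n^'n \<Rightarrow> real" where
  "objective A B \<eta> X = frob_sq (A ** X - X ** B) + \<eta>\<^sup>2 * frob_sq X"

definition is_solution :: "real^'n^'n \<Rightarrow> real^'n^'n \<Rightarrow> real \<Rightarrow> real^'n^'n \<Rightarrow> bool" where
  "is_solution A B \<eta> X \<longleftrightarrow> X *v onesv = onesv \<and>
     (\<forall>Y. Y *v onesv = onesv \<longrightarrow> objective A B \<eta> X \<le> objective A B \<eta> Y)"

definition rect_contour :: "real \<Rightarrow> real \<Rightarrow> complex" where
  "rect_contour \<eta> =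
     linepath (Complex (-3) (-\<eta>/2)) (Complex 3 (-\<eta>/2)) +++
     linepath (Complex 3 (-\<eta>/2)) (Complex 3 (\<eta>/2)) +++
     linepath (Complex 3 (\<eta>/2)) (Complex (-3) (\<eta>/2)) +++
     linepath (Complex (-3) (\<eta>/2)) (Complex (-3) (-\<eta>/2))"

definition Ffun :: "real^'n^'n \<Rightarrow> real \<Rightarrow> complex \<Rightarrow> complex" where
  "Ffun B \<eta> z = 2 * \<i> /
     ((\<Sum>i\<in>UNIV. (resolvent B (z + \<i> * of_real \<eta>) *v onesv) $ i)
      - (\<Sum>i\<in>UNIV. (resolvent B (z - \<i> * of_real \<eta>) *v onesv) $ i))"

end

theory Submission
  imports Defs
begin

(* Write G(z) = F(z) R_A(z) J R_B(z + i eta); its (i,j) entry is F(z) (R_A(z) 1)_i (1^T R_B(z + i eta))_j.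
   The resolvent identities A R_A(z) = I + z R_A(z) and R_B(w) B = I + w R_B(w) give
     A G - G B + i eta G = F J R_B(z + i eta) - F R_A(z) J.
   Since Im (1^T R_B(w) 1) has the sign of Im w, F is holomorphic in the strip |Im z| < eta, so the first
   term integrates to zero over the rectangle, while the second has constant rows. Hence W, the contour
   integral of G, satisfies A W - W B + i eta W = -N 1^T with N_i the integral of F (R_A 1)_i.
   Reflection in the real axis maps the rectangle onto itself with reversed orientation and conjugates
   F and the resolvents; this gives Re N = 0 and (W + conj W) 1 = 2i times the integral of R_A 1,
   which is 4 pi 1 because the rectangle winds once around the spectrum of A.
   So Y = Re W / (2 pi) and Z = Im W / (2 pi) satisfy Y 1 = 1, A Y - Y B = eta Z and
   A Z - Z B + eta Y = c 1^T: these are the optimality conditions of the strictly convex constrained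
   least-squares problem, whose unique solution is therefore Y. *)

no_notation fps_nth (infixl "$" 75)

section \<open>Symmetric matrices and their resolvents\<close>

lemma symmetric_mat_nth: "symmetric_mat M \<Longrightarrow> M $ j $ i = M $ i $ j"
  unfolding symmetric_mat_def by (metis transpose_def vec_lambda_beta)

lemma cmat_nth [simp]: "cmat M $ i $ j = of_real (M $ i $ j)"
  by (simp add: cmat_def)

lemma mat_nth: "mat c $ i $ j = (if i = j then c else 0)"
  by (simp add: mat_def)

lemma sum_norm_nth_square: "(\<Sum>i\<in>UNIV. (norm (u $ i))\<^sup>2) = (norm u)\<^sup>2"
  by (simp add: norm_vec_def L2_set_def sum_nonneg)

lemma matrix_minus_mat_mult_vector: "(N - mat c) *v v = N *v v - c *s v"
  for N :: "'a::comm_ring_1^'n^'n"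
proof -
  have "mat c *v v = c *s v"
    by (simp add: vec_eq_iff matrix_vector_mult_def mat_def if_distrib[of "\<lambda>x. x * _"] cong: if_cong)
  then show ?thesis by (simp add: matrix_vector_mult_diff_rdistrib)
qed

lemma vector_mult_matrix_minus_mat: "v v* (N - mat c) = v v* N - c *s v"
  for N :: "'a::comm_ring_1^'n^'n"
proof -
  have "v v* mat c = c *s v"
    by (simp add: vec_eq_iff vector_matrix_mult_def mat_def if_distrib[of "\<lambda>x. _ * x"] mult.commute
        cong: if_cong)
  then show ?thesis by (simp add: vector_matrix_mult_diff_rdistrib)
qed

lemma quadratic_form_cmat_real:
  fixes M :: "real^'n^'n" and u :: "complex^'n"
  assumes "symmetric_mat M"
  shows "Im (\<Sum>i\<in>UNIV. cnj (u $ i) * (cmat M *v u) $ i) = 0"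
proof -
  define q where "q = (\<Sum>i\<in>UNIV. cnj (u $ i) * (cmat M *v u) $ i)"
  have q: "q = (\<Sum>i\<in>UNIV. \<Sum>j\<in>UNIV. cnj (u $ i) * of_real (M $ i $ j) * u $ j)"
    unfolding q_def matrix_vector_mult_def by (simp add: sum_distrib_left mult.assoc)
  have "cnj q = (\<Sum>i\<in>UNIV. \<Sum>j\<in>UNIV. u $ i * of_real (M $ i $ j) * cnj (u $ j))"
    unfolding q by simp
  also have "\<dots> = (\<Sum>j\<in>UNIV. \<Sum>i\<in>UNIV. u $ i * of_real (M $ i $ j) * cnj (u $ j))"
    by (rule sum.swap)
  also have "\<dots> = q" unfolding q
    by (intro sum.cong refl) (simp add: symmetric_mat_nth[OF assms] mult.commute mult.left_commute)
  finally have "cnj q = q" .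
  then show ?thesis unfolding q_def[symmetric] by (simp add: complex_eq_iff)
qed

lemma cmat_eigenvalue_real:
  fixes M :: "real^'n^'n"
  assumes "symmetric_mat M" and "v \<noteq> 0" and "cmat M *v v = w *s v"
  shows "Im w = 0"
proof -
  have "(\<Sum>i\<in>UNIV. cnj (v $ i) * (cmat M *v v) $ i) = w * of_real ((norm v)\<^sup>2)"
    unfolding assms(3) sum_norm_nth_square[symmetric]
    by (simp add: sum_distrib_left mult_ac complex_norm_square flip: of_real_power)
  with quadratic_form_cmat_real[OF assms(1), of v] have "Im w * (norm v)\<^sup>2 = 0"
    by simp
  with assms(2) show ?thesis by simp
qed

lemma real_eigenvector_of_cmat:
  fixes M :: "real^'n^'n"
  assumes "v \<noteq> 0" and "cmat M *v v = of_real r *s v"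
  obtains x where "x \<noteq> 0" and "M *v x = r *\<^sub>R x"
proof -
  define x where "x = (\<chi> i. Re (v $ i))"
  define y where "y = (\<chi> i. Im (v $ i))"
  have ev: "(\<Sum>j\<in>UNIV. of_real (M $ i $ j) * v $ j) = of_real r * v $ i" for i
    using assms(2) by (simp add: vec_eq_iff matrix_vector_mult_def)
  have "(\<Sum>j\<in>UNIV. M $ i $ j * Re (v $ j)) = r * Re (v $ i)" for i
    using arg_cong[where f=Re, OF ev[of i]] by (simp add: Re_sum)
  moreover have "(\<Sum>j\<in>UNIV. M $ i $ j * Im (v $ j)) = r * Im (v $ i)" for i
    using arg_cong[where f=Im, OF ev[of i]] by (simp add: Im_sum)
  ultimately have "M *v x = r *\<^sub>R x" "M *v y = r *\<^sub>R y"
    by (simp_all add: vec_eq_iff matrix_vector_mult_def x_def y_def)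
  moreover have "x \<noteq> 0 \<or> y \<noteq> 0"
    using assms(1) by (auto simp: vec_eq_iff x_def y_def complex_eq_iff)
  ultimately show ?thesis using that by blast
qed

lemma spec_norm_nonneg: "0 \<le> spec_norm M"
  unfolding spec_norm_def by (simp add: onorm_pos_le)

lemma abs_eigenvalue_le_spec_norm:
  fixes M :: "real^'n^'n"
  assumes "x \<noteq> 0" and "M *v x = r *\<^sub>R x"
  shows "\<bar>r\<bar> \<le> spec_norm M"
proof -
  have "\<bar>r\<bar> * norm x = norm (M *v x)" using assms(2) by simp
  also have "\<dots> \<le> spec_norm M * norm x"
    unfolding spec_norm_def by (rule onorm) simp
  finally show ?thesis using assms(1) by simp
qed

lemma inner_symmetric_matrix_mult:
  fixes M :: "real^'n^'n"
  assumes "symmetric_mat M"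
  shows "inner (M *v x) y = inner x (M *v y)"
proof -
  have "M *v x = x v* M"
    using assms unfolding symmetric_mat_def by (metis transpose_matrix_vector)
  then show ?thesis by (simp add: dot_lmul_matrix)
qed

lemma finite_eigenvalues_symmetric:
  fixes M :: "real^'n^'n"
  assumes "symmetric_mat M"
  shows "finite {r. \<exists>x. x \<noteq> 0 \<and> M *v x = r *\<^sub>R x}" (is "finite ?E")
proof -
  define ev where "ev r = (SOME x. x \<noteq> 0 \<and> M *v x = r *\<^sub>R x)" for r
  have ev: "ev r \<noteq> 0 \<and> M *v ev r = r *\<^sub>R ev r" if "r \<in> ?E" for r
    using that unfolding ev_def mem_Collect_eq by (rule someI_ex)
  have inj: "inj_on ev ?E"
  proof (rule inj_onI)
    fix r s assume "r \<in> ?E" "s \<in> ?E" "ev r = ev s"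
    have "r *\<^sub>R ev r = M *v ev r" using ev[OF \<open>r \<in> ?E\<close>] by simp
    also have "\<dots> = s *\<^sub>R ev r" using ev[OF \<open>s \<in> ?E\<close>] \<open>ev r = ev s\<close> by simp
    finally show "r = s" using ev[OF \<open>r \<in> ?E\<close>] by simp
  qed
  have orth: "orthogonal (ev r) (ev s)" if "r \<in> ?E" "s \<in> ?E" "r \<noteq> s" for r s
  proof -
    have "r * inner (ev r) (ev s) = inner (M *v ev r) (ev s)" using ev[OF that(1)] by simp
    also have "\<dots> = inner (ev r) (M *v ev s)" by (rule inner_symmetric_matrix_mult[OF assms])
    also have "\<dots> = s * inner (ev r) (ev s)" using ev[OF that(2)] by simp
    finally show ?thesis using that(3) by (simp add: orthogonal_def)
  qed
  have "pairwise orthogonal (ev ` ?E)"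
  proof (rule pairwiseI)
    fix a b assume "a \<in> ev ` ?E" "b \<in> ev ` ?E" "a \<noteq> b"
    then obtain r s where "r \<in> ?E" "s \<in> ?E" "a = ev r" "b = ev s" by blast
    with orth \<open>a \<noteq> b\<close> show "orthogonal a b" by blast
  qed
  moreover have "0 \<notin> ev ` ?E"
  proof
    assume "0 \<in> ev ` ?E"
    then obtain r where "r \<in> ?E" and "0 = ev r" by blast
    with ev[OF \<open>r \<in> ?E\<close>] show False by simp
  qed
  ultimately have "independent (ev ` ?E)" by (rule pairwise_orthogonal_independent)
  then have "finite (ev ` ?E)" using independent_bound by blast
  then show ?thesis using finite_imageD[OF _ inj] by blast
qed

lemma eigenvalue_of_singular_cmat_minus_mat:
  fixes M :: "real^'n^'n"
  assumes "symmetric_mat M" and "\<not> invertible (cmat M - mat z)"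
  obtains x where "z = of_real (Re z)" and "x \<noteq> 0" and "M *v x = Re z *\<^sub>R x"
proof -
  have "\<not> (\<forall>v. (cmat M - mat z) *v v = 0 \<longrightarrow> v = 0)"
    using assms(2) matrix_left_invertible_ker invertible_left_inverse by blast
  then obtain v where "v \<noteq> 0" and "(cmat M - mat z) *v v = 0" by blast
  then have ev: "cmat M *v v = z *s v" by (simp add: matrix_minus_mat_mult_vector)
  have z: "z = of_real (Re z)"
    using cmat_eigenvalue_real[OF assms(1) \<open>v \<noteq> 0\<close> ev] by (simp add: complex_eq_iff)
  have "cmat M *v v = of_real (Re z) *s v"
    unfolding z[symmetric] by (rule ev)
  then obtain x where "x \<noteq> 0" and "M *v x = Re z *\<^sub>R x"
    by (rule real_eigenvector_of_cmat[OF \<open>v \<noteq> 0\<close>])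
  with z show ?thesis by (rule that)
qed

lemma singular_cmat_minus_mat:
  fixes M :: "real^'n^'n"
  assumes "symmetric_mat M" and "\<not> invertible (cmat M - mat z)"
  shows "Im z = 0" and "\<bar>Re z\<bar> \<le> spec_norm M"
proof -
  obtain x where x: "z = of_real (Re z)" "x \<noteq> 0" "M *v x = Re z *\<^sub>R x"
    by (rule eigenvalue_of_singular_cmat_minus_mat[OF assms])
  then show "Im z = 0" by (metis Im_complex_of_real)
  show "\<bar>Re z\<bar> \<le> spec_norm M" using x(2,3) by (rule abs_eigenvalue_le_spec_norm)
qed

lemma invertible_cmat_minus_mat:
  fixes M :: "real^'n^'n"
  assumes "symmetric_mat M" and "Im z \<noteq> 0 \<or> spec_norm M < \<bar>Re z\<bar>"
  shows "invertible (cmat M - mat z)"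
  using singular_cmat_minus_mat[OF assms(1)] assms(2) by fastforce

lemma invertible_cmat_minus_mat_norm:
  fixes M :: "real^'n^'n"
  assumes "symmetric_mat M" and "spec_norm M < cmod z"
  shows "invertible (cmat M - mat z)"
proof (rule ccontr)
  assume "\<not> invertible (cmat M - mat z)"
  then have "Im z = 0" "\<bar>Re z\<bar> \<le> spec_norm M" by (rule singular_cmat_minus_mat[OF assms(1)])+
  with assms(2) show False by (simp add: cmod_eq_Re)
qed

lemma finite_singular_cmat_minus_mat:
  fixes M :: "real^'n^'n"
  assumes "symmetric_mat M"
  shows "finite {z. \<not> invertible (cmat M - mat z)}"
proof (rule finite_subset)
  show "{z. \<not> invertible (cmat M - mat z)} \<subseteq> of_real ` {r. \<exists>x. x \<noteq> 0 \<and> M *v x = r *\<^sub>R x}"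
  proof
    fix z assume "z \<in> {z. \<not> invertible (cmat M - mat z)}"
    then obtain x where "z = of_real (Re z)" "x \<noteq> 0" "M *v x = Re z *\<^sub>R x"
      by (auto elim: eigenvalue_of_singular_cmat_minus_mat[OF assms])
    then show "z \<in> of_real ` {r. \<exists>x. x \<noteq> 0 \<and> M *v x = r *\<^sub>R x}" by blast
  qed
qed (use finite_eigenvalues_symmetric[OF assms] in blast)

lemma matrix_mul_matrix_inv:
  fixes N :: "'a::field^'n^'n"
  assumes "invertible N"
  shows "N ** matrix_inv N = mat 1" and "matrix_inv N ** N = mat 1"
proof -
  have "\<exists>N'. N ** N' = mat 1 \<and> N' ** N = mat 1" using assms unfolding invertible_def by blast
  from someI_ex[OF this] show "N ** matrix_inv N = mat 1" "matrix_inv N ** N = mat 1"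
    unfolding matrix_inv_def by auto
qed

lemma matrix_inv_eqI:
  fixes N P :: "'a::field^'n^'n"
  assumes "N ** P = mat 1"
  shows "matrix_inv N = P"
proof -
  have "invertible N" using assms invertible_right_inverse by blast
  have "matrix_inv N = (matrix_inv N ** N) ** P"
    by (simp add: assms matrix_mul_assoc[symmetric])
  also have "\<dots> = P" by (simp add: matrix_mul_matrix_inv[OF \<open>invertible N\<close>])
  finally show ?thesis .
qed

lemma resolvent_eq_matrix_inv: "resolvent M z = matrix_inv (cmat M - mat z)"
  unfolding resolvent_def mat_def ..

lemma resolvent_inverse:
  assumes "invertible (cmat M - mat z)"
  shows "(cmat M - mat z) ** resolvent M z = mat 1" and "resolvent M z ** (cmat M - mat z) = mat 1"
  unfolding resolvent_eq_matrix_inv by (simp_all add: matrix_mul_matrix_inv[OF assms])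

lemma cmat_mult_resolvent_vector:
  assumes "invertible (cmat M - mat z)"
  shows "cmat M *v (resolvent M z *v v) = v + z *s (resolvent M z *v v)"
    and "(v v* resolvent M z) v* cmat M = v + z *s (v v* resolvent M z)"
proof -
  have "(cmat M - mat z) *v (resolvent M z *v v) = v"
    by (simp add: matrix_vector_mul_assoc resolvent_inverse[OF assms])
  then show "cmat M *v (resolvent M z *v v) = v + z *s (resolvent M z *v v)"
    by (simp only: matrix_minus_mat_mult_vector diff_eq_eq)
  have "(v v* resolvent M z) v* (cmat M - mat z) = v"
    by (simp add: vector_matrix_mul_assoc resolvent_inverse[OF assms])
  then show "(v v* resolvent M z) v* cmat M = v + z *s (v v* resolvent M z)"
    by (simp only: vector_mult_matrix_minus_mat diff_eq_eq)
qed

lemma cnj_resolvent: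
  assumes "invertible (cmat M - mat z)"
  shows "cnj (resolvent M z $ i $ j) = resolvent M (cnj z) $ i $ j"
proof -
  have "(cmat M - mat (cnj z)) ** (\<chi> i j. cnj (resolvent M z $ i $ j)) = mat 1"
  proof -
    have "((cmat M - mat (cnj z)) ** (\<chi> i j. cnj (resolvent M z $ i $ j))) $ a $ b
        = cnj (((cmat M - mat z) ** resolvent M z) $ a $ b)" for a b
      by (simp add: matrix_matrix_mult_def mat_nth if_distrib[of cnj] cong: if_cong)
    then show ?thesis by (simp add: vec_eq_iff resolvent_inverse[OF assms] mat_nth)
  qed
  then show ?thesis unfolding resolvent_eq_matrix_inv[of M "cnj z"] by (simp add: matrix_inv_eqI)
qed

lemma holomorphic_on_det:
  fixes N :: "complex \<Rightarrow> complex^'n^'n"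
  assumes "\<And>a b. (\<lambda>z. N z $ a $ b) holomorphic_on S"
  shows "(\<lambda>z. det (N z)) holomorphic_on S"
  unfolding det_def by (intro holomorphic_intros holomorphic_on_prod assms)

lemma matrix_inv_nth_cramer:
  fixes N :: "'a::field^'n^'n"
  assumes "invertible N"
  shows "matrix_inv N $ k $ j = det (\<chi> a b. if b = k then (if a = j then 1 else 0) else N $ a $ b) / det N"
proof -
  have "N *v (matrix_inv N *v axis j 1) = axis j 1"
    by (simp add: matrix_vector_mul_assoc matrix_mul_matrix_inv[OF assms])
  moreover have "det N \<noteq> 0" using assms invertible_det_nz by blast
  ultimately have "matrix_inv N *v axis j 1 = (\<chi> k. det (\<chi> a b. if b = k then axis j 1 $ a else N $ a $ b) / det N)"
    using cramer by blast
  then have "(matrix_inv N *v axis j 1) $ k = det (\<chi> a b. if b = k then axis j 1 $ a else N $ a $ b) / det N"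
    by simp
  moreover have "(matrix_inv N *v axis j 1) $ k = matrix_inv N $ k $ j"
    by (simp add: matrix_vector_mult_def axis_def if_distrib[of "\<lambda>x. _ * x"] cong: if_cong)
  moreover have "(\<chi> a b. if b = k then axis j 1 $ a else N $ a $ b)
      = (\<chi> a b. if b = k then (if a = j then 1 else 0) else N $ a $ b)"
    by (simp add: vec_eq_iff axis_def)
  ultimately show ?thesis by simp
qed

lemma holomorphic_on_resolvent_nth:
  fixes M :: "real^'n^'n"
  assumes "g holomorphic_on S" and "\<And>z. z \<in> S \<Longrightarrow> invertible (cmat M - mat (g z))"
  shows "(\<lambda>z. resolvent M (g z) $ i $ j) holomorphic_on S"
proof -
  let ?N = "\<lambda>z. cmat M - mat (g z)"
  have N: "(\<lambda>z. ?N z $ a $ b) holomorphic_on S" for a b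
    by (cases "a = b") (auto intro!: holomorphic_intros assms(1) simp: mat_nth)
  have cramer_entries:
    "(\<lambda>z. (\<chi> a b. if b = i then (if a = j then 1 else 0) else ?N z $ a $ b) $ a $ b) holomorphic_on S"
    for a b by (cases "b = i") (simp_all add: N del: vector_minus_component)
  have "(\<lambda>z. det (\<chi> a b. if b = i then (if a = j then 1 else 0) else ?N z $ a $ b) / det (?N z))
      holomorphic_on S"
    using assms(2) invertible_det_nz
    by (intro holomorphic_on_divide holomorphic_on_det N cramer_entries) auto
  then show ?thesis
    by (rule holomorphic_transform)
       (simp add: resolvent_eq_matrix_inv matrix_inv_nth_cramer[OF assms(2)])
qed

lemma norm_resolvent_mult_le:
  fixes M :: "real^'n^'n"
  assumes "invertible (cmat M - mat z)" and "onorm ((*v) (cmat M)) < cmod z"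
  shows "norm (resolvent M z *v v) \<le> norm v / (cmod z - onorm ((*v) (cmat M)))"
proof -
  define K where "K = onorm ((*v) (cmat M))"
  define u where "u = resolvent M z *v v"
  have "v = cmat M *v u - z *s u"
    using cmat_mult_resolvent_vector(1)[OF assms(1)] unfolding u_def by simp
  then have "norm v \<ge> norm (z *s u) - norm (cmat M *v u)"
    by (metis norm_minus_commute norm_triangle_ineq2)
  moreover have "norm (cmat M *v u) \<le> K * norm u"
    unfolding K_def by (rule onorm) simp
  moreover have "norm (z *s u) = cmod z * norm u"
    by (simp add: norm_vec_def norm_mult L2_set_right_distrib)
  ultimately have "(cmod z - K) * norm u \<le> norm v" by (simp add: left_diff_distrib)
  with assms(2) show ?thesis unfolding u_def K_def by (simp add: field_simps)
qed

definition resolvent_sum :: "real^'n^'n \<Rightarrow> complex \<Rightarrow> complex" where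
  "resolvent_sum M w = (\<Sum>i\<in>UNIV. (resolvent M w *v onesv) $ i)"

lemma resolvent_mult_ones_nonzero:
  fixes M :: "real^'n^'n"
  assumes "invertible (cmat M - mat w)"
  shows "resolvent M w *v onesv \<noteq> 0"
proof
  assume "resolvent M w *v onesv = 0"
  then have "(onesv :: complex^'n) = 0"
    using cmat_mult_resolvent_vector(1)[OF assms, of onesv] by simp
  then show False by (simp add: onesv_def vec_eq_iff)
qed

lemma Im_resolvent_sum:
  fixes M :: "real^'n^'n"
  assumes "symmetric_mat M" and "invertible (cmat M - mat w)"
  shows "Im (resolvent_sum M w) = Im w * (norm (resolvent M w *v onesv))\<^sup>2"
proof -
  define u where "u = resolvent M w *v onesv"
  have "(\<Sum>i\<in>UNIV. cnj (u $ i) * (cmat M *v u) $ i) = (\<Sum>i\<in>UNIV. cnj (u $ i)) + w * of_real ((norm u)\<^sup>2)"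
    unfolding u_def cmat_mult_resolvent_vector(1)[OF assms(2)] sum_norm_nth_square[symmetric]
    by (simp add: distrib_left sum.distrib sum_distrib_left onesv_def mult_ac complex_norm_square
        flip: of_real_power)
  then have "- Im (\<Sum>i\<in>UNIV. u $ i) + Im w * (norm u)\<^sup>2 = 0"
    using quadratic_form_cmat_real[OF assms(1), of u] by (simp add: Im_sum sum_negf)
  then show ?thesis unfolding resolvent_sum_def u_def by simp
qed

lemma Im_resolvent_sum_pos:
  fixes M :: "real^'n^'n"
  assumes "symmetric_mat M" and "0 < Im w"
  shows "0 < Im (resolvent_sum M w)"
proof -
  have "invertible (cmat M - mat w)" using assms by (simp add: invertible_cmat_minus_mat)
  then show ?thesis
    using Im_resolvent_sum[OF assms(1)] resolvent_mult_ones_nonzero assms(2) by fastforce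
qed

lemma Im_resolvent_sum_neg:
  fixes M :: "real^'n^'n"
  assumes "symmetric_mat M" and "Im w < 0"
  shows "Im (resolvent_sum M w) < 0"
proof -
  have "invertible (cmat M - mat w)" using assms by (simp add: invertible_cmat_minus_mat)
  then show ?thesis
    using Im_resolvent_sum[OF assms(1)] resolvent_mult_ones_nonzero assms(2)
    by (fastforce intro: mult_neg_pos)
qed

section \<open>Contour integrals\<close>

lemma contour_integral_linepath_cnj:
  "contour_integral (linepath a b) (\<lambda>z. cnj (f (cnj z))) = cnj (contour_integral (linepath (cnj a) (cnj b)) f)"
proof -
  have "cnj \<circ> linepath (cnj a) (cnj b) = linepath a b"
    by (simp add: fun_eq_iff linepath_def)
  then show ?thesis
    using contour_integral_cnj[of "linepath (cnj a) (cnj b)" "\<lambda>z. cnj (f (cnj z))"] by (simp add: o_def)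
qed

lemma contour_integrable_linepath_cnj:
  assumes "f contour_integrable_on linepath (cnj a) (cnj b)"
  shows "(\<lambda>z. cnj (f (cnj z))) contour_integrable_on linepath a b"
proof -
  have "cnj \<circ> linepath a b = linepath (cnj a) (cnj b)"
    by (simp add: fun_eq_iff linepath_def)
  then show ?thesis
    using assms contour_integrable_on_compose_cnj_iff[of "linepath a b" f] by (simp add: o_def)
qed

lemma contour_integral_rectpath_split:
  fixes a1 a3 :: complex
  defines "a2 \<equiv> Complex (Re a3) (Im a1)" and "a4 \<equiv> Complex (Re a1) (Im a3)"
  assumes "f contour_integrable_on rectpath a1 a3"
  shows "contour_integral (rectpath a1 a3) f = contour_integral (linepath a1 a2) f
      + contour_integral (linepath a2 a3) f + contour_integral (linepath a3 a4) f
      + contour_integral (linepath a4 a1) f"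
    and "f contour_integrable_on linepath a1 a2" and "f contour_integrable_on linepath a2 a3"
    and "f contour_integrable_on linepath a3 a4" and "f contour_integrable_on linepath a4 a1"
proof -
  have f: "f contour_integrable_on linepath a1 a2 +++ linepath a2 a3 +++ linepath a3 a4 +++ linepath a4 a1"
    using assms(3) unfolding rectpath_def Let_def a2_def a4_def .
  have f234: "f contour_integrable_on linepath a2 a3 +++ linepath a3 a4 +++ linepath a4 a1"
    and f34: "f contour_integrable_on linepath a3 a4 +++ linepath a4 a1"
    using contour_integrable_joinD2[OF f] contour_integrable_joinD2 by force+
  show "f contour_integrable_on linepath a1 a2" "f contour_integrable_on linepath a2 a3"
    "f contour_integrable_on linepath a3 a4" "f contour_integrable_on linepath a4 a1"
    using contour_integrable_joinD1[OF f] contour_integrable_joinD1[OF f234]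
      contour_integrable_joinD1[OF f34] contour_integrable_joinD2[OF f34] by simp_all
  then show "contour_integral (rectpath a1 a3) f = contour_integral (linepath a1 a2) f
      + contour_integral (linepath a2 a3) f + contour_integral (linepath a3 a4) f
      + contour_integral (linepath a4 a1) f"
    unfolding rectpath_def Let_def a2_def[symmetric] a4_def[symmetric]
    using f234 f34 by (simp add: add.assoc)
qed

text \<open>The rectangle is symmetric about the real axis, and reflection reverses its orientation.\<close>

lemma contour_integral_symmetric_rectpath_cnj:
  assumes "f contour_integrable_on rectpath (Complex a (-b)) (Complex c b)"
  shows "contour_integral (rectpath (Complex a (-b)) (Complex c b)) (\<lambda>z. cnj (f (cnj z)))
       = - cnj (contour_integral (rectpath (Complex a (-b)) (Complex c b)) f)"
proof -
  define a1 a2 a3 a4 where "a1 = Complex a (-b)" and "a2 = Complex c (-b)"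
    and "a3 = Complex c b" and "a4 = Complex a b"
  define g where "g z = cnj (f (cnj z))" for z
  have cnj: "cnj a1 = a4" "cnj a2 = a3" "cnj a3 = a2" "cnj a4 = a1"
    unfolding a1_def a2_def a3_def a4_def by (simp_all add: complex_eq_iff)
  have sides: "Complex (Re a3) (Im a1) = a2" "Complex (Re a1) (Im a3) = a4"
    unfolding a1_def a2_def a3_def a4_def by simp_all
  note f = contour_integral_rectpath_split[OF assms[folded a1_def a3_def], unfolded sides]
  have rev: "contour_integral (linepath p q) f = - contour_integral (linepath q p) f" for p q
    using contour_integral_reversepath[of "linepath q p" f] by simp
  have "g contour_integrable_on linepath p q"
    if "f contour_integrable_on linepath (cnj q) (cnj p)" for p q
    unfolding g_def
    by (rule contour_integrable_linepath_cnj, rule contour_integrable_reversepath[OF _ that, simplified])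
  then have g: "g contour_integrable_on rectpath a1 a3"
    unfolding rectpath_def Let_def sides using f(2-5) cnj
    by (intro contour_integrable_joinI) auto
  have "contour_integral (rectpath a1 a3) g = contour_integral (linepath a1 a2) g
      + contour_integral (linepath a2 a3) g + contour_integral (linepath a3 a4) g
      + contour_integral (linepath a4 a1) g"
    by (rule contour_integral_rectpath_split(1)[OF g, unfolded sides])
  also have "\<dots> = - cnj (contour_integral (rectpath a1 a3) f)"
    unfolding g_def contour_integral_linepath_cnj cnj f(1) rev[of a4 a3] rev[of a3 a2]
      rev[of a2 a1] rev[of a1 a4]
    by simp
  finally show ?thesis unfolding g_def a1_def a3_def .
qed

lemma rect_contour_eq_rectpath: "rect_contour \<eta> = rectpath (Complex (-3) (-\<eta>/2)) (Complex 3 (\<eta>/2))"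
  by (simp add: rect_contour_def rectpath_def Let_def)

lemma valid_path_rect_contour: "valid_path (rect_contour \<eta>)"
  and pathfinish_rect_contour: "pathfinish (rect_contour \<eta>) = pathstart (rect_contour \<eta>)"
  unfolding rect_contour_eq_rectpath by simp_all

lemma path_image_rect_contour:
  assumes "0 < \<eta>"
  shows "path_image (rect_contour \<eta>) =
     {z. \<bar>Re z\<bar> = 3 \<and> \<bar>Im z\<bar> \<le> \<eta>/2} \<union> {z. \<bar>Im z\<bar> = \<eta>/2 \<and> \<bar>Re z\<bar> \<le> 3}"
  unfolding rect_contour_eq_rectpath using assms by (subst path_image_rectpath) auto

lemma norm_resolvent_nth_add_inverse_le:
  fixes M :: "real^'n^'n"
  defines "K \<equiv> onorm ((*v) (cmat M))"
  assumes "invertible (cmat M - mat z)" and "K < cmod z"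
  shows "norm (resolvent M z $ i $ m + (if i = m then 1 else 0) / z) \<le> K / ((cmod z - K) * cmod z)"
proof -
  define u where "u = resolvent M z *v axis m 1"
  have "(cmat M *v u) $ i = (if i = m then 1 else 0) + z * resolvent M z $ i $ m"
    using arg_cong[where f="\<lambda>v. v $ i", OF cmat_mult_resolvent_vector(1)[OF assms(2), of "axis m 1"]]
    unfolding u_def by (simp add: axis_def matrix_vector_mult_def if_distrib[of "\<lambda>x. _ * x"] cong: if_cong)
  moreover have "z \<noteq> 0"
    using assms(3) onorm_pos_le[of "(*v) (cmat M)"] unfolding K_def by auto
  ultimately have "resolvent M z $ i $ m + (if i = m then 1 else 0) / z = (cmat M *v u) $ i / z"
    by (simp add: field_simps)
  moreover have "cmod ((cmat M *v u) $ i) \<le> K * (1 / (cmod z - K))"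
  proof -
    have "cmod ((cmat M *v u) $ i) \<le> norm (cmat M *v u)" by (rule Finite_Cartesian_Product.norm_nth_le)
    also have "\<dots> \<le> K * norm u" unfolding K_def by (rule onorm) simp
    also have "\<dots> \<le> K * (1 / (cmod z - K))"
      using norm_resolvent_mult_le[OF assms(2), of "axis m 1"] assms(3) onorm_pos_le[of "(*v) (cmat M)"]
      unfolding u_def K_def by (intro mult_left_mono) (simp_all add: norm_axis_1)
    finally show ?thesis .
  qed
  then have "cmod ((cmat M *v u) $ i) / cmod z \<le> K * (1 / (cmod z - K)) / cmod z"
    by (rule divide_right_mono) simp
  ultimately show ?thesis by (simp add: norm_divide)
qed

lemma norm_contour_integral_resolvent_nth_circlepath_le:
  fixes M :: "real^'n^'n"
  defines "K \<equiv> onorm ((*v) (cmat M))"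
  assumes "symmetric_mat M" and R: "max K (spec_norm M) < R"
  shows "norm (contour_integral (circlepath 0 R) (\<lambda>z. resolvent M z $ i $ m)
           + 2 * pi * \<i> * (if i = m then 1 else 0)) \<le> 2 * pi * K / (R - K)"
proof -
  define \<delta> :: complex where "\<delta> = (if i = m then 1 else 0)"
  define f where "f z = resolvent M z $ i $ m" for z
  have K: "0 \<le> K" unfolding K_def by (simp add: onorm_pos_le)
  have circle_image: "path_image (circlepath 0 R) \<subseteq> {z. spec_norm M < cmod z}"
    using R by auto
  note invertible = invertible_cmat_minus_mat_norm[OF assms(2)]
  have open_outside: "open {z. spec_norm M < cmod z}"
    by (simp add: open_Collect_less continuous_on_norm_id)
  have "f contour_integrable_on circlepath 0 R"
    unfolding f_def using circle_image invertible
    by (intro contour_integrable_holomorphic_simple[OF _ open_outside] holomorphic_on_resolvent_nth) auto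
  moreover have inv_int: "(\<lambda>z. 1 / z) contour_integrable_on circlepath 0 R"
    using circle_image spec_norm_nonneg[of M]
    by (intro contour_integrable_holomorphic_simple[OF _ open_outside] holomorphic_intros) auto
  moreover have "contour_integral (circlepath 0 R) (\<lambda>z. \<delta> * (1 / z)) = 2 * pi * \<i> * \<delta>"
    using contour_integral_lmul[OF inv_int, of \<delta>] contour_integral_circlepath[of R 0] R K by simp
  ultimately have f_int: "(\<lambda>z. f z + \<delta> / z) contour_integrable_on circlepath 0 R"
    and circle_eq: "contour_integral (circlepath 0 R) (\<lambda>z. f z + \<delta> / z)
      = contour_integral (circlepath 0 R) f + 2 * pi * \<i> * \<delta>"
    using contour_integral_add[of f _ "\<lambda>z. \<delta> * (1 / z)"]
      contour_integrable_add[of f _ "\<lambda>z. \<delta> * (1 / z)"] contour_integrable_lmul[OF inv_int, of \<delta>]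
    by simp_all
  have "norm (f z + \<delta> / z) \<le> K / ((R - K) * R)" if "norm (z - 0) = R" for z
  proof -
    have z: "cmod z = R" using that by simp
    then have "invertible (cmat M - mat z)" using R by (intro invertible) simp
    from norm_resolvent_nth_add_inverse_le[OF this, of i m] show ?thesis
      using z R unfolding f_def \<delta>_def K_def by simp
  qed
  then have "norm (contour_integral (circlepath 0 R) f + 2 * pi * \<i> * \<delta>) \<le> K / ((R - K) * R) * (2 * pi * R)"
    unfolding circle_eq[symmetric] using R K
    by (intro has_contour_integral_bound_circlepath[OF has_contour_integral_integral[OF f_int]]) auto
  also have "\<dots> = 2 * pi * K / (R - K)" using R K by (simp add: field_simps)
  finally show ?thesis unfolding f_def \<delta>_def .
qed

text \<open>By the residue theorem, any path winding once around the spectrum gives the same integral as a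
  large circle, on which the resolvent is \<open>-1/z\<close> up to an error of order \<open>R\<^sup>-\<^sup>2\<close>.\<close>

lemma contour_integral_resolvent_nth:
  fixes M :: "real^'n^'n"
  assumes sym: "symmetric_mat M" and "valid_path \<gamma>" and "pathfinish \<gamma> = pathstart \<gamma>"
    and encloses: "\<And>r. \<bar>r\<bar> \<le> spec_norm M \<Longrightarrow>
      of_real r \<notin> path_image \<gamma> \<and> winding_number \<gamma> (of_real r) = 1"
  shows "contour_integral \<gamma> (\<lambda>z. resolvent M z $ i $ m) = - 2 * pi * \<i> * (if i = m then 1 else 0)"
proof -
  define S where "S = {z. \<not> invertible (cmat M - mat z)}"
  define f where "f z = resolvent M z $ i $ m" for z
  define K where "K = onorm ((*v) (cmat M))"
  define c where "c = contour_integral \<gamma> f + 2 * pi * \<i> * (if i = m then 1 else 0)"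
  have fin: "finite S" unfolding S_def by (rule finite_singular_cmat_minus_mat[OF sym])
  have S_real: "p = of_real (Re p)" "\<bar>Re p\<bar> \<le> spec_norm M" if "p \<in> S" for p
    using singular_cmat_minus_mat[OF sym] that unfolding S_def by (auto simp: complex_eq_iff)
  have S_enclosed: "p \<notin> path_image \<gamma>" "winding_number \<gamma> p = 1" if "p \<in> S" for p
    using encloses[OF S_real(2)[OF that]] by (subst S_real(1)[OF that], simp)+
  have holo: "f holomorphic_on UNIV - S"
    unfolding f_def S_def by (rule holomorphic_on_resolvent_nth) auto
  have residues: "contour_integral g f = 2 * pi * \<i> * (\<Sum>p\<in>S. residue f p)"
    if "valid_path g" "pathfinish g = pathstart g" "path_image g \<subseteq> UNIV - S"
      and "\<And>p. p \<in> S \<Longrightarrow> winding_number g p = 1" for g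
    using Residue_theorem[OF open_UNIV connected_UNIV fin holo that(1-3)] that(4) by simp
  have "norm c \<le> 2 * pi * K / (R - K)" if R: "max K (spec_norm M) < R" for R
  proof -
    have inside: "cmod p < R" if "p \<in> S" for p
      using S_real[OF that] R by (metis max.strict_boundedE norm_of_real order.strict_trans1)
    moreover have "0 < R" using R spec_norm_nonneg[of M] by simp
    ultimately have "path_image (circlepath 0 R) \<subseteq> UNIV - S"
      by (auto simp: dist_norm) (metis less_irrefl)
    then have "contour_integral (circlepath 0 R) f = contour_integral \<gamma> f"
      using S_enclosed inside
      by (subst (1 2) residues) (auto simp: assms(2,3) intro!: winding_number_circlepath)
    then show ?thesis
      using norm_contour_integral_resolvent_nth_circlepath_le[OF sym, of R i m] R
      unfolding c_def f_def K_def by simp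
  qed
  then have "eventually (\<lambda>R. norm c \<le> 2 * pi * K / (R - K)) at_top"
    using eventually_gt_at_top by (rule eventually_mono[rotated])
  moreover have "((\<lambda>R. 2 * pi * K / (R - K)) \<longlongrightarrow> 0) at_top"
    by (intro tendsto_divide_0[OF tendsto_const] filterlim_at_top_imp_at_infinity
        filterlim_tendsto_add_at_top[OF tendsto_const filterlim_ident, where c="-K", simplified])
  ultimately have "norm c \<le> 0"
    using tendsto_lowerbound trivial_limit_at_top_linorder by blast
  then show ?thesis unfolding c_def f_def by (simp add: add_eq_0_iff)
qed

lemma path_image_rect_contour_subset:
  assumes "0 < \<eta>"
  shows "path_image (rect_contour \<eta>) \<subseteq> {z. \<bar>Im z\<bar> < \<eta>}"
  using assms unfolding path_image_rect_contour[OF assms] by auto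

lemma rect_contour_encloses:
  assumes "0 < \<eta>" and "\<bar>r\<bar> < 3"
  shows "of_real r \<notin> path_image (rect_contour \<eta>)" and "winding_number (rect_contour \<eta>) (of_real r) = 1"
proof -
  show "of_real r \<notin> path_image (rect_contour \<eta>)"
    using assms by (simp add: path_image_rect_contour)
  show "winding_number (rect_contour \<eta>) (of_real r) = 1"
    unfolding rect_contour_eq_rectpath using assms
    by (intro winding_number_rectpath) (auto simp: in_box_complex_iff)
qed

lemma cnj_path_image_rect_contour:
  assumes "0 < \<eta>" and "z \<in> path_image (rect_contour \<eta>)"
  shows "cnj z \<in> path_image (rect_contour \<eta>)"
  using assms unfolding path_image_rect_contour[OF assms(1)] by auto

lemma contour_integral_rect_contour_cnj:
  assumes "f contour_integrable_on rect_contour \<eta>"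
    and "\<And>z. z \<in> path_image (rect_contour \<eta>) \<Longrightarrow> cnj (f (cnj z)) = g z"
  shows "contour_integral (rect_contour \<eta>) g = - cnj (contour_integral (rect_contour \<eta>) f)"
proof -
  have "contour_integral (rect_contour \<eta>) g = contour_integral (rect_contour \<eta>) (\<lambda>z. cnj (f (cnj z)))"
    using assms(2) by (intro contour_integral_eq) simp
  also have "\<dots> = - cnj (contour_integral (rect_contour \<eta>) f)"
    using contour_integral_symmetric_rectpath_cnj[of f "-3" "\<eta>/2" 3] assms(1)
    unfolding rect_contour_eq_rectpath by simp
  finally show ?thesis .
qed

definition strip :: "real \<Rightarrow> complex set" where
  "strip \<eta> = {z. \<bar>Im z\<bar> < \<eta>}"

lemma open_strip: "open (strip \<eta>)"
  unfolding strip_def by (intro open_Collect_less continuous_intros)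

lemma convex_strip: "convex (strip \<eta>)"
proof -
  have "strip \<eta> = {z. Im z > - \<eta>} \<inter> {z. Im z < \<eta>}" unfolding strip_def by auto
  then show ?thesis by (simp add: convex_Int convex_halfspace_Im_gt convex_halfspace_Im_lt)
qed

lemma invertible_shift_strip:
  fixes B :: "real^'n^'n"
  assumes "symmetric_mat B" and "z \<in> strip \<eta>"
  shows "invertible (cmat B - mat (z + \<i> * of_real \<eta>))" and "invertible (cmat B - mat (z - \<i> * of_real \<eta>))"
  using assms(2) unfolding strip_def by (auto intro!: invertible_cmat_minus_mat[OF assms(1)])

lemma Ffun_eq:
  "Ffun B \<eta> z = 2 * \<i> / (resolvent_sum B (z + \<i> * of_real \<eta>) - resolvent_sum B (z - \<i> * of_real \<eta>))"
  unfolding Ffun_def resolvent_sum_def ..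

lemma Ffun_denominator_nonzero:
  fixes B :: "real^'n^'n"
  assumes "symmetric_mat B" and "z \<in> strip \<eta>"
  shows "resolvent_sum B (z + \<i> * of_real \<eta>) - resolvent_sum B (z - \<i> * of_real \<eta>) \<noteq> 0"
proof -
  have "0 < Im (resolvent_sum B (z + \<i> * of_real \<eta>))" "Im (resolvent_sum B (z - \<i> * of_real \<eta>)) < 0"
    using assms(2) unfolding strip_def
    by (auto intro!: Im_resolvent_sum_pos Im_resolvent_sum_neg assms(1))
  then have "0 < Im (resolvent_sum B (z + \<i> * of_real \<eta>) - resolvent_sum B (z - \<i> * of_real \<eta>))"
    by simp
  then show ?thesis by auto
qed

lemma Ffun_mult_denominator:
  fixes B :: "real^'n^'n"
  assumes "symmetric_mat B" and "z \<in> strip \<eta>"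
  shows "Ffun B \<eta> z * (resolvent_sum B (z + \<i> * of_real \<eta>) - resolvent_sum B (z - \<i> * of_real \<eta>)) = 2 * \<i>"
  using Ffun_denominator_nonzero[OF assms] unfolding Ffun_eq by simp

lemma holomorphic_on_resolvent_sum:
  fixes M :: "real^'n^'n"
  assumes "g holomorphic_on S" and "\<And>z. z \<in> S \<Longrightarrow> invertible (cmat M - mat (g z))"
  shows "(\<lambda>z. resolvent_sum M (g z)) holomorphic_on S"
  unfolding resolvent_sum_def matrix_vector_mult_def onesv_def
  by (simp add: holomorphic_on_sum holomorphic_on_resolvent_nth assms)

lemma holomorphic_on_Ffun:
  fixes B :: "real^'n^'n"
  assumes "symmetric_mat B"
  shows "Ffun B \<eta> holomorphic_on strip \<eta>"
  unfolding Ffun_eq[abs_def] using invertible_shift_strip[OF assms] Ffun_denominator_nonzero[OF assms]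
  by (intro holomorphic_intros holomorphic_on_resolvent_sum) auto

lemma cnj_resolvent_sum:
  assumes "invertible (cmat M - mat w)"
  shows "cnj (resolvent_sum M w) = resolvent_sum M (cnj w)"
  unfolding resolvent_sum_def matrix_vector_mult_def onesv_def
  by (simp add: cnj_resolvent[OF assms])

lemma cnj_Ffun:
  fixes B :: "real^'n^'n"
  assumes "symmetric_mat B" and "z \<in> strip \<eta>"
  shows "cnj (Ffun B \<eta> (cnj z)) = Ffun B \<eta> z"
proof -
  have "cnj z \<in> strip \<eta>" using assms(2) unfolding strip_def by simp
  from invertible_shift_strip[OF assms(1) this]
  have "cnj (resolvent_sum B (cnj z + \<i> * of_real \<eta>)) = resolvent_sum B (z - \<i> * of_real \<eta>)"
    and "cnj (resolvent_sum B (cnj z - \<i> * of_real \<eta>)) = resolvent_sum B (z + \<i> * of_real \<eta>)"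
    by (simp_all add: cnj_resolvent_sum)
  then show ?thesis
    unfolding Ffun_eq by (simp add: minus_divide_right)
qed

section \<open>Optimality conditions\<close>

lemma matrix_add_rdistrib: "(B + C) ** A = B ** A + C ** A"
  for A B C :: "'a::semiring_1^'n^'n"
  by (simp add: matrix_matrix_mult_def vec_eq_iff distrib_right sum.distrib)

lemma frob_sq_eq_inner: "frob_sq M = inner M M"
  unfolding frob_sq_def by (simp add: inner_vec_def power2_eq_square)

lemma inner_matrix_mult_left:
  fixes Z A D :: "real^'n^'n"
  shows "inner Z (A ** D) = inner (transpose A ** Z) D"
proof -
  have "inner Z (A ** D) = (\<Sum>i\<in>UNIV. \<Sum>j\<in>UNIV. \<Sum>k\<in>UNIV. Z $ i $ j * A $ i $ k * D $ k $ j)"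
    by (simp add: inner_vec_def matrix_matrix_mult_def sum_distrib_left mult.assoc)
  also have "\<dots> = (\<Sum>k\<in>UNIV. \<Sum>j\<in>UNIV. \<Sum>i\<in>UNIV. Z $ i $ j * A $ i $ k * D $ k $ j)"
    by (subst sum.swap, subst (2) sum.swap, subst sum.swap) (rule refl)
  also have "\<dots> = inner (transpose A ** Z) D"
    by (simp add: inner_vec_def matrix_matrix_mult_def transpose_def sum_distrib_left sum_distrib_right
        mult_ac)
  finally show ?thesis .
qed

lemma inner_matrix_mult_right:
  fixes Z B D :: "real^'n^'n"
  shows "inner Z (D ** B) = inner (Z ** transpose B) D"
proof -
  have "inner Z (D ** B) = (\<Sum>i\<in>UNIV. \<Sum>j\<in>UNIV. \<Sum>k\<in>UNIV. Z $ i $ j * D $ i $ k * B $ k $ j)"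
    by (simp add: inner_vec_def matrix_matrix_mult_def sum_distrib_left mult.assoc)
  also have "\<dots> = (\<Sum>i\<in>UNIV. \<Sum>k\<in>UNIV. \<Sum>j\<in>UNIV. Z $ i $ j * D $ i $ k * B $ k $ j)"
    by (rule sum.cong[OF refl], rule sum.swap)
  also have "\<dots> = inner (Z ** transpose B) D"
    by (simp add: inner_vec_def matrix_matrix_mult_def transpose_def sum_distrib_left sum_distrib_right
        mult_ac)
  finally show ?thesis .
qed

text \<open>The stationarity conditions say that the gradient \<open>2\<eta>(AZ - ZB + \<eta>Y)\<close> of the strictly convex
  objective at \<open>Y\<close> is a multiple \<open>c 1\<^sup>T\<close>, hence orthogonal to every feasible direction \<open>D\<close> with
  \<open>D 1 = 0\<close>.\<close>

lemma is_solution_eq_stationary_point: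
  fixes A B X Y Z :: "real^'n^'n" and c :: "real^'n"
  assumes "symmetric_mat A" and "symmetric_mat B" and "0 < \<eta>"
    and Y_ones: "Y *v onesv = onesv"
    and Z: "A ** Y - Y ** B = \<eta> *\<^sub>R Z"
    and stationary: "A ** Z - Z ** B + \<eta> *\<^sub>R Y = (\<chi> i j. c $ i)"
    and "is_solution A B \<eta> X"
  shows "X = Y"
proof -
  define D where "D = X - Y"
  define S where "S M = A ** M - M ** B" for M :: "real^'n^'n"
  have X_ones: "X *v onesv = onesv" and opt: "objective A B \<eta> X \<le> objective A B \<eta> Y"
    using assms(7) Y_ones unfolding is_solution_def by auto
  have D_ones: "D *v onesv = 0"
    unfolding D_def using X_ones Y_ones by (simp add: matrix_vector_mult_diff_rdistrib)
  have obj: "objective A B \<eta> M = inner (S M) (S M) + \<eta>\<^sup>2 * inner M M" for M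
    unfolding objective_def S_def frob_sq_eq_inner ..
  have "inner (\<chi> i j. c $ i) D = (\<Sum>i\<in>UNIV. c $ i * (D *v onesv) $ i)"
    by (simp add: inner_vec_def matrix_vector_mult_def onesv_def sum_distrib_left)
  then have c_D: "inner (\<chi> i j. c $ i) D = 0" using D_ones by simp
  have "inner (S Y) (S D) = \<eta> * (inner Z (A ** D) - inner Z (D ** B))"
    unfolding S_def Z by (simp add: inner_diff_right right_diff_distrib)
  also have "\<dots> = \<eta> * inner (A ** Z - Z ** B) D"
    using assms(1,2) unfolding inner_matrix_mult_left[of Z A D] inner_matrix_mult_right[of Z D B]
      symmetric_mat_def
    by (simp add: inner_diff_left)
  also have "\<dots> = - \<eta>\<^sup>2 * inner Y D"
    using c_D by (simp add: stationary[THEN eq_diff_eq[THEN iffD2]] inner_diff_left power2_eq_square)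
  finally have cross: "inner (S Y) (S D) + \<eta>\<^sup>2 * inner Y D = 0" by simp
  have X: "X = Y + D" unfolding D_def by simp
  have "S X = S Y + S D"
    unfolding X S_def by (simp add: matrix_add_ldistrib matrix_add_rdistrib)
  then have "objective A B \<eta> X = objective A B \<eta> Y + objective A B \<eta> D
      + 2 * (inner (S Y) (S D) + \<eta>\<^sup>2 * inner Y D)"
    unfolding obj by (simp add: X inner_add_left inner_add_right inner_commute algebra_simps)
  then have "objective A B \<eta> D \<le> 0" using opt cross by simp
  moreover have "\<eta>\<^sup>2 * inner D D \<le> objective A B \<eta> D" unfolding obj by simp
  ultimately have "inner D D \<le> 0" using assms(3) by (smt (verit) mult_pos_pos zero_less_power inner_ge_zero)
  then have "D = 0" by (metis inner_gt_zero_iff not_less)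
  then show ?thesis unfolding D_def by simp
qed

section \<open>The contour integral satisfies the optimality conditions\<close>

lemma sum_vector_matrix_ones: "(\<Sum>j\<in>UNIV. (onesv v* M) $ j) = (\<Sum>i\<in>UNIV. (M *v onesv) $ i)"
proof -
  have "(\<Sum>j\<in>UNIV. (onesv v* M) $ j) = (\<Sum>j\<in>UNIV. \<Sum>i\<in>UNIV. M $ i $ j)"
    by (simp add: vector_matrix_mult_def onesv_def)
  also have "\<dots> = (\<Sum>i\<in>UNIV. \<Sum>j\<in>UNIV. M $ i $ j)" by (rule sum.swap)
  also have "\<dots> = (\<Sum>i\<in>UNIV. (M *v onesv) $ i)" by (simp add: matrix_vector_mult_def onesv_def)
  finally show ?thesis .
qed

lemma matrix_mult_onesJ_mult_nth:
  fixes P Q :: "'a::comm_semiring_1^'n^'n"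
  shows "(P ** onesJ ** Q) $ i $ j = (P *v onesv) $ i * (onesv v* Q) $ j"
  by (simp add: matrix_matrix_mult_def matrix_vector_mult_def vector_matrix_mult_def onesJ_def onesv_def
      sum_distrib_left sum_distrib_right)

lemma Re_Im_sylvester:
  fixes A B :: "real^'n^'n" and W :: "'n \<Rightarrow> 'n \<Rightarrow> complex" and n :: "'n \<Rightarrow> complex"
    and \<eta> s :: real
  assumes sylvester: "\<And>i j. (\<Sum>k\<in>UNIV. of_real (A $ i $ k) * W k j) - (\<Sum>k\<in>UNIV. W i k * of_real (B $ k $ j))
      + \<i> * of_real \<eta> * W i j = n i"
    and Re_n: "\<And>i. Re (n i) = 0"
  defines "Y \<equiv> \<chi> i j. Re (W i j) / s" and "Z \<equiv> \<chi> i j. Im (W i j) / s"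
    and "c \<equiv> \<chi> i. Im (n i) / s"
  shows "A ** Y - Y ** B = \<eta> *\<^sub>R Z"
    and "A ** Z - Z ** B + \<eta> *\<^sub>R Y = (\<chi> i j. c $ i)"
proof -
  have Re: "(\<Sum>k\<in>UNIV. A $ i $ k * Re (W k j)) - (\<Sum>k\<in>UNIV. Re (W i k) * B $ k $ j) = \<eta> * Im (W i j)"
    and Im: "(\<Sum>k\<in>UNIV. A $ i $ k * Im (W k j)) - (\<Sum>k\<in>UNIV. Im (W i k) * B $ k $ j) + \<eta> * Re (W i j)
      = Im (n i)" for i j
    using arg_cong[where f=Re, OF sylvester[of i j]] arg_cong[where f=Im, OF sylvester[of i j]] Re_n[of i]
    by (simp_all add: Re_sum Im_sum)
  show "A ** Y - Y ** B = \<eta> *\<^sub>R Z"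
    using arg_cong[where f="\<lambda>x. x / s", OF Re]
    unfolding Y_def Z_def by (simp add: vec_eq_iff matrix_matrix_mult_def sum_divide_distrib diff_divide_distrib)
  show "A ** Z - Z ** B + \<eta> *\<^sub>R Y = (\<chi> i j. c $ i)"
    using arg_cong[where f="\<lambda>x. x / s", OF Im]
    unfolding Y_def Z_def c_def
    by (simp add: vec_eq_iff matrix_matrix_mult_def sum_divide_distrib diff_divide_distrib add_divide_distrib)
qed

locale sylvester_contour =
  fixes A B :: "real^'n^'n" and \<eta> :: real
  assumes symmetric_A: "symmetric_mat A" and symmetric_B: "symmetric_mat B"
    and spec_norm_A: "spec_norm A < 3" and eta_pos: "0 < \<eta>"
begin

definition region :: "complex set" where
  "region = strip \<eta> - {z. \<not> invertible (cmat A - mat z)}"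

definition RA_ones :: "'n \<Rightarrow> complex \<Rightarrow> complex" where
  "RA_ones i z = (resolvent A z *v onesv) $ i"

definition ones_RB :: "'n \<Rightarrow> complex \<Rightarrow> complex" where
  "ones_RB j w = (onesv v* resolvent B w) $ j"

definition integrand :: "'n \<Rightarrow> 'n \<Rightarrow> complex \<Rightarrow> complex" where
  "integrand i j z = Ffun B \<eta> z * (resolvent A z ** onesJ ** resolvent B (z + \<i> * of_real \<eta>)) $ i $ j"

definition W :: "'n \<Rightarrow> 'n \<Rightarrow> complex" where
  "W i j = contour_integral (rect_contour \<eta>) (integrand i j)"

definition N :: "'n \<Rightarrow> complex" where
  "N i = contour_integral (rect_contour \<eta>) (\<lambda>z. Ffun B \<eta> z * RA_ones i z)"

lemma integrand_eq: "integrand i j z = Ffun B \<eta> z * (RA_ones i z * ones_RB j (z + \<i> * of_real \<eta>))"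
  unfolding integrand_def RA_ones_def ones_RB_def matrix_mult_onesJ_mult_nth ..

lemma region_subset_strip: "region \<subseteq> strip \<eta>"
  unfolding region_def by blast

lemma open_region: "open region"
  unfolding region_def
  by (intro open_Diff open_strip finite_imp_closed finite_singular_cmat_minus_mat symmetric_A)

lemma invertible_A_region: "z \<in> region \<Longrightarrow> invertible (cmat A - mat z)"
  unfolding region_def by blast

lemma path_image_subset_region: "path_image (rect_contour \<eta>) \<subseteq> region"
proof
  fix z assume z: "z \<in> path_image (rect_contour \<eta>)"
  then have "z \<in> strip \<eta>" using path_image_rect_contour_subset[OF eta_pos] unfolding strip_def by blast
  moreover have "invertible (cmat A - mat z)"
    using z eta_pos spec_norm_A unfolding path_image_rect_contour[OF eta_pos]
    by (intro invertible_cmat_minus_mat symmetric_A) auto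
  ultimately show "z \<in> region" unfolding region_def by blast
qed

lemma contour_integrable_rect_contour:
  "f holomorphic_on region \<Longrightarrow> f contour_integrable_on rect_contour \<eta>"
  by (rule contour_integrable_holomorphic_simple[OF _ open_region valid_path_rect_contour
        path_image_subset_region])

lemma holomorphic_RA_ones: "RA_ones i holomorphic_on region"
  unfolding RA_ones_def[abs_def] matrix_vector_mult_def onesv_def
  by (simp add: holomorphic_on_sum holomorphic_on_resolvent_nth invertible_A_region)

lemma holomorphic_ones_RB:
  assumes "g holomorphic_on S" and "\<And>z. z \<in> S \<Longrightarrow> invertible (cmat B - mat (g z))"
  shows "(\<lambda>z. ones_RB j (g z)) holomorphic_on S"
  unfolding ones_RB_def vector_matrix_mult_def onesv_def
  by (simp add: holomorphic_on_sum holomorphic_on_resolvent_nth assms)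

lemma holomorphic_ones_RB_shift:
  "(\<lambda>z. ones_RB j (z + \<i> * of_real \<eta>)) holomorphic_on strip \<eta>"
  "(\<lambda>z. ones_RB j (z - \<i> * of_real \<eta>)) holomorphic_on strip \<eta>"
  using invertible_shift_strip[OF symmetric_B]
  by (intro holomorphic_ones_RB holomorphic_intros; simp)+

lemma holomorphic_Ffun_region: "Ffun B \<eta> holomorphic_on region"
  and holomorphic_ones_RB_region:
    "(\<lambda>z. ones_RB j (z + \<i> * of_real \<eta>)) holomorphic_on region"
    "(\<lambda>z. ones_RB j (z - \<i> * of_real \<eta>)) holomorphic_on region"
  using holomorphic_on_Ffun[OF symmetric_B] holomorphic_ones_RB_shift
  by (auto intro: holomorphic_on_subset[OF _ region_subset_strip])

lemma holomorphic_integrand: "integrand i j holomorphic_on region"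
  unfolding integrand_eq[abs_def]
  by (intro holomorphic_on_mult holomorphic_RA_ones holomorphic_Ffun_region holomorphic_ones_RB_region)

lemma A_mult_RA_ones:
  assumes "z \<in> region"
  shows "(\<Sum>k\<in>UNIV. of_real (A $ i $ k) * RA_ones k z) = 1 + z * RA_ones i z"
proof -
  have "(cmat A *v (resolvent A z *v onesv)) $ i = (onesv + z *s (resolvent A z *v onesv)) $ i"
    by (simp only: cmat_mult_resolvent_vector(1)[OF invertible_A_region[OF assms]])
  then show ?thesis
    unfolding RA_ones_def by (simp add: matrix_vector_mult_def[of "cmat A"] onesv_def)
qed

lemma ones_RB_mult_B:
  assumes "invertible (cmat B - mat w)"
  shows "(\<Sum>k\<in>UNIV. ones_RB k w * of_real (B $ k $ j)) = 1 + w * ones_RB j w"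
proof -
  have "((onesv v* resolvent B w) v* cmat B) $ j = (onesv + w *s (onesv v* resolvent B w)) $ j"
    by (simp only: cmat_mult_resolvent_vector(2)[OF assms])
  then show ?thesis
    unfolding ones_RB_def by (simp add: vector_matrix_mult_def[of _ "cmat B"] onesv_def)
qed

text \<open>The integrand satisfies a Sylvester equation up to terms that are either holomorphic inside
  the contour or independent of \<open>j\<close>.\<close>

lemma integrand_sylvester:
  assumes "z \<in> region"
  shows "(\<Sum>k\<in>UNIV. of_real (A $ i $ k) * integrand k j z) - (\<Sum>k\<in>UNIV. integrand i k z * of_real (B $ k $ j))
      + \<i> * of_real \<eta> * integrand i j z
    = Ffun B \<eta> z * ones_RB j (z + \<i> * of_real \<eta>) - Ffun B \<eta> z * RA_ones i z"
proof -
  define w where "w = z + \<i> * of_real \<eta>"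
  have "invertible (cmat B - mat w)"
    unfolding w_def using assms region_subset_strip invertible_shift_strip[OF symmetric_B] by blast
  then have "(\<Sum>k\<in>UNIV. integrand i k z * of_real (B $ k $ j))
      = Ffun B \<eta> z * RA_ones i z * (1 + w * ones_RB j w)"
    unfolding integrand_eq w_def[symmetric] ones_RB_mult_B[OF \<open>invertible _\<close>, symmetric]
    by (simp add: sum_distrib_left mult_ac)
  moreover have "(\<Sum>k\<in>UNIV. of_real (A $ i $ k) * integrand k j z)
      = Ffun B \<eta> z * ones_RB j w * (1 + z * RA_ones i z)"
    unfolding integrand_eq w_def[symmetric] A_mult_RA_ones[OF assms, symmetric]
    by (simp add: sum_distrib_left mult_ac)
  ultimately show ?thesis
    unfolding integrand_eq w_def[symmetric] by (simp add: w_def algebra_simps)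
qed

lemma contour_integral_Ffun_ones_RB:
  "contour_integral (rect_contour \<eta>) (\<lambda>z. Ffun B \<eta> z * ones_RB j (z + \<i> * of_real \<eta>)) = 0"
proof -
  have "(\<lambda>z. Ffun B \<eta> z * ones_RB j (z + \<i> * of_real \<eta>)) holomorphic_on strip \<eta>"
    by (intro holomorphic_on_mult holomorphic_on_Ffun symmetric_B holomorphic_ones_RB_shift)
  moreover have "path_image (rect_contour \<eta>) \<subseteq> strip \<eta>"
    using path_image_subset_region region_subset_strip by blast
  ultimately show ?thesis
    using Cauchy_theorem_convex_simple[OF _ convex_strip valid_path_rect_contour _ pathfinish_rect_contour]
    by (simp add: contour_integral_unique)
qed

lemma W_sylvester:
  "(\<Sum>k\<in>UNIV. of_real (A $ i $ k) * W k j) - (\<Sum>k\<in>UNIV. W i k * of_real (B $ k $ j))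
      + \<i> * of_real \<eta> * W i j = - N i"
proof -
  have integrable: "integrand k l contour_integrable_on rect_contour \<eta>" for k l
    by (intro contour_integrable_rect_contour holomorphic_integrand)
  have "(\<Sum>k\<in>UNIV. of_real (A $ i $ k) * W k j) - (\<Sum>k\<in>UNIV. W i k * of_real (B $ k $ j))
      + \<i> * of_real \<eta> * W i j
    = contour_integral (rect_contour \<eta>) (\<lambda>z. (\<Sum>k\<in>UNIV. of_real (A $ i $ k) * integrand k j z)
      - (\<Sum>k\<in>UNIV. integrand i k z * of_real (B $ k $ j)) + \<i> * of_real \<eta> * integrand i j z)"
    unfolding W_def using integrable
    by (simp add: contour_integral_add contour_integral_diff contour_integral_sum contour_integral_lmul
        contour_integral_rmul contour_integrable_add contour_integrable_diff contour_integrable_sum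
        contour_integrable_lmul contour_integrable_rmul)
  also have "\<dots> = contour_integral (rect_contour \<eta>)
      (\<lambda>z. Ffun B \<eta> z * ones_RB j (z + \<i> * of_real \<eta>) - Ffun B \<eta> z * RA_ones i z)"
    using integrand_sylvester path_image_subset_region by (intro contour_integral_eq) blast
  also have "\<dots> = contour_integral (rect_contour \<eta>) (\<lambda>z. Ffun B \<eta> z * ones_RB j (z + \<i> * of_real \<eta>))
      - N i"
    unfolding N_def
    by (intro contour_integral_diff contour_integrable_rect_contour holomorphic_on_mult
        holomorphic_Ffun_region holomorphic_ones_RB_region holomorphic_RA_ones)
  finally show ?thesis by (simp add: contour_integral_Ffun_ones_RB)
qed

lemma cnj_RA_ones:
  assumes "z \<in> path_image (rect_contour \<eta>)"
  shows "cnj (RA_ones i (cnj z)) = RA_ones i z"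
proof -
  have "invertible (cmat A - mat (cnj z))"
    using cnj_path_image_rect_contour[OF eta_pos assms] path_image_subset_region invertible_A_region
    by blast
  then show ?thesis
    unfolding RA_ones_def matrix_vector_mult_def onesv_def by (simp add: cnj_resolvent)
qed

lemma cnj_ones_RB:
  assumes "invertible (cmat B - mat w)"
  shows "cnj (ones_RB j w) = ones_RB j (cnj w)"
  unfolding ones_RB_def vector_matrix_mult_def onesv_def by (simp add: cnj_resolvent[OF assms])

lemma cnj_Ffun_path_image:
  assumes "z \<in> path_image (rect_contour \<eta>)"
  shows "cnj (Ffun B \<eta> (cnj z)) = Ffun B \<eta> z"
  using assms path_image_subset_region region_subset_strip by (intro cnj_Ffun symmetric_B) blast

lemma Re_N: "Re (N i) = 0"
proof -
  have "N i = - cnj (N i)"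
    unfolding N_def using cnj_Ffun_path_image cnj_RA_ones
    by (intro contour_integral_rect_contour_cnj contour_integrable_rect_contour holomorphic_on_mult
        holomorphic_Ffun_region holomorphic_RA_ones) simp
  then show ?thesis by (simp add: complex_eq_iff)
qed

lemma cnj_W:
  "cnj (W i j) = - contour_integral (rect_contour \<eta>)
     (\<lambda>z. Ffun B \<eta> z * (RA_ones i z * ones_RB j (z - \<i> * of_real \<eta>)))"
proof -
  have "cnj (integrand i j (cnj z)) = Ffun B \<eta> z * (RA_ones i z * ones_RB j (z - \<i> * of_real \<eta>))"
    if "z \<in> path_image (rect_contour \<eta>)" for z
  proof -
    have "cnj z \<in> strip \<eta>"
      using cnj_path_image_rect_contour[OF eta_pos that] path_image_subset_region region_subset_strip
      by blast
    then have "cnj (ones_RB j (cnj z + \<i> * of_real \<eta>)) = ones_RB j (z - \<i> * of_real \<eta>)"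
      using cnj_ones_RB invertible_shift_strip(1)[OF symmetric_B] by simp
    then show ?thesis
      unfolding integrand_eq using cnj_Ffun_path_image[OF that] cnj_RA_ones[OF that] by simp
  qed
  then show ?thesis
    unfolding W_def
    by (subst contour_integral_rect_contour_cnj
        [where g="\<lambda>z. Ffun B \<eta> z * (RA_ones i z * ones_RB j (z - \<i> * of_real \<eta>))"])
       (simp_all add: contour_integrable_rect_contour holomorphic_integrand)
qed

lemma contour_integral_RA_ones: "contour_integral (rect_contour \<eta>) (RA_ones i) = - 2 * pi * \<i>"
proof -
  have "contour_integral (rect_contour \<eta>) (RA_ones i)
      = (\<Sum>m\<in>UNIV. contour_integral (rect_contour \<eta>) (\<lambda>z. resolvent A z $ i $ m))"
    unfolding RA_ones_def[abs_def] matrix_vector_mult_def onesv_def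
    by (simp add: contour_integral_sum contour_integrable_rect_contour holomorphic_on_resolvent_nth
        invertible_A_region)
  also have "\<dots> = (\<Sum>m\<in>UNIV. if m = i then - 2 * pi * \<i> else 0)"
  proof (rule sum.cong[OF refl])
    fix m
    have "contour_integral (rect_contour \<eta>) (\<lambda>z. resolvent A z $ i $ m) = - 2 * pi * \<i> * (if i = m then 1 else 0)"
      using spec_norm_A rect_contour_encloses[OF eta_pos]
      by (intro contour_integral_resolvent_nth symmetric_A valid_path_rect_contour pathfinish_rect_contour)
        auto
    then show "contour_integral (rect_contour \<eta>) (\<lambda>z. resolvent A z $ i $ m) = (if m = i then - 2 * pi * \<i> else 0)"
      by auto
  qed
  finally show ?thesis by simp
qed

lemma sum_Re_W: "(\<Sum>j\<in>UNIV. Re (W i j)) = 2 * pi"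
proof -
  let ?q = "\<lambda>j z. Ffun B \<eta> z * (RA_ones i z * ones_RB j (z - \<i> * of_real \<eta>))"
  have "(\<Sum>j\<in>UNIV. W i j + cnj (W i j))
      = contour_integral (rect_contour \<eta>) (\<lambda>z. (\<Sum>j\<in>UNIV. integrand i j z) - (\<Sum>j\<in>UNIV. ?q j z))"
    unfolding cnj_W unfolding W_def
    by (simp add: contour_integral_diff contour_integral_sum contour_integrable_diff contour_integrable_sum
        contour_integrable_rect_contour holomorphic_integrand holomorphic_on_mult holomorphic_Ffun_region
        holomorphic_RA_ones holomorphic_ones_RB_region sum_subtractf)
  also have "\<dots> = contour_integral (rect_contour \<eta>) (\<lambda>z. 2 * \<i> * RA_ones i z)"
  proof (rule contour_integral_eq)
    fix z assume "z \<in> path_image (rect_contour \<eta>)"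
    then have "z \<in> strip \<eta>" using path_image_subset_region region_subset_strip by blast
    have sum_ones_RB: "(\<Sum>j\<in>UNIV. ones_RB j w) = resolvent_sum B w" for w
      unfolding ones_RB_def resolvent_sum_def by (rule sum_vector_matrix_ones)
    have "(\<Sum>j\<in>UNIV. integrand i j z) - (\<Sum>j\<in>UNIV. ?q j z) = RA_ones i z * (Ffun B \<eta> z *
        ((\<Sum>j\<in>UNIV. ones_RB j (z + \<i> * of_real \<eta>)) - (\<Sum>j\<in>UNIV. ones_RB j (z - \<i> * of_real \<eta>))))"
      unfolding integrand_eq by (simp add: sum_distrib_left right_diff_distrib sum_subtractf mult_ac)
    also have "\<dots> = 2 * \<i> * RA_ones i z"
      unfolding sum_ones_RB Ffun_mult_denominator[OF symmetric_B \<open>z \<in> strip \<eta>\<close>] by simp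
    finally show "(\<Sum>j\<in>UNIV. integrand i j z) - (\<Sum>j\<in>UNIV. ?q j z) = 2 * \<i> * RA_ones i z" .
  qed
  also have "\<dots> = 4 * pi"
    using contour_integral_lmul[of "RA_ones i" "rect_contour \<eta>" "2 * \<i>"]
    by (simp add: contour_integral_RA_ones contour_integrable_rect_contour holomorphic_RA_ones)
  finally have "Re (\<Sum>j\<in>UNIV. W i j + cnj (W i j)) = 4 * pi" by simp
  then show ?thesis by (simp add: Re_sum sum.distrib)
qed

lemma stationary_point:
  defines "Y \<equiv> \<chi> i j. Re (W i j) / (2 * pi)" and "Z \<equiv> \<chi> i j. Im (W i j) / (2 * pi)"
    and "c \<equiv> \<chi> i. Im (- N i) / (2 * pi)"
  shows "Y *v onesv = onesv" and "A ** Y - Y ** B = \<eta> *\<^sub>R Z"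
    and "A ** Z - Z ** B + \<eta> *\<^sub>R Y = (\<chi> i j. c $ i)"
proof -
  show "Y *v onesv = onesv"
    unfolding Y_def using sum_Re_W
    by (simp add: vec_eq_iff matrix_vector_mult_def onesv_def sum_divide_distrib[symmetric])
  have "Re (- N i) = 0" for i using Re_N by simp
  from Re_Im_sylvester[where n="\<lambda>i. - N i", OF W_sylvester this]
  show "A ** Y - Y ** B = \<eta> *\<^sub>R Z" "A ** Z - Z ** B + \<eta> *\<^sub>R Y = (\<chi> i j. c $ i)"
    unfolding Y_def Z_def c_def by blast+
qed

end

theorem lemma6p2:
  fixes A B X :: "real^'n^'n" and \<eta> :: real
  assumes "symmetric_mat A" and "symmetric_mat B"
    and "spec_norm A \<le> 2.5"
    and "\<eta> > 0"
    and "is_solution A B \<eta> X"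
  shows "X = (\<chi> i j. Re (contour_integral (rect_contour \<eta>)
              (\<lambda>z. (Ffun B \<eta> z * ((resolvent A z ** onesJ ** resolvent B (z + \<i> * of_real \<eta>)) $ i $ j)))) / (2 * pi))"
proof -
  interpret sylvester_contour A B \<eta>
    using assms by unfold_locales auto
  show ?thesis
    using is_solution_eq_stationary_point[OF assms(1,2,4) stationary_point assms(5)]
    unfolding W_def integrand_def .
qed

end
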